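(* Let $S$ be a right LCM monoid, let $F$ be an accurate foundation set for $S$ and let $s\in S_c$. Then $s\cdot F=\{sf\mid f\in F\}$ and $F\cdot s=\{fs\mid f\in F\}$ are accurate foundation sets for $S$. Moreover, for every unital $*$-homomorphism $\pi$ from $C^*(S)$ into a unital $C^*$-algebra, the relation $\sum_{f\in s\cdot F}\pi(e_{fS})=1$ holds if and only if both $\sum_{f\in F}\pi(e_{fS})=1$ and $\pi(v_sv_s^* )=1$ hold; and likewise the relation $\sum_{f\in F\cdot s}\pi(e_{fS})=1$ holds if and only if both $\sum_{f\in F}\pi(e_{fS})=1$ and $\pi(v_sv_s^* )=1$ hold.
   Context: A right LCM monoid is a countable discrete monoid $S$ that is left cancellative and such that for all $s,t\in S$ the intersection $sS\cap tS$ is either empty or equal to $rS$ for some $r\in S$. A finite subset $F\subset S$ is a foundation set if for every $t\in S$ there is $s\in F$ with $sS\cap tS\neq\emptyset$; it is accurate if $fS\cap f'S=\emptyset$ for distinct $f,f'\in F$. The core subsemigroup is $S_c=\{s\in S\mid sS\cap tS\neq\emptyset \text{ for all } t\in S\}$. The full semigroup $C^*$-algebra $C^*(S)$ (in the sense of Li) is the universal $C^*$-algebra generated by isometries $\{v_s: s\in S\}$ and projections $\{e_X : X\in\mathcal{J}(S)\}$, where $\mathcal{J}(S)=\{\emptyset\}\cup\{sS: s\in S\}$, subject to $v_{st}=v_sv_t$, $v_se_Xv_s^*=e_{sX}$, $e_S=1$, $e_\emptyset=0$, $e_Xe_Y=e_{X\cap Y}$; in particular $e_{sS}=v_sv_s^*$.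 *)

theory Defs
  imports Complex_Main "HOL-Library.Countable"
begin

class cstar_algebra = real_normed_algebra_1 + banach +
  fixes scaleC :: "complex \<Rightarrow> 'a \<Rightarrow> 'a"
    and cstar :: "'a \<Rightarrow> 'a"
  assumes scaleC_add_right: "scaleC a (x + y) = scaleC a x + scaleC a y"
    and scaleC_add_left: "scaleC (a + b) x = scaleC a x + scaleC b x"
    and scaleC_scaleC: "scaleC a (scaleC b x) = scaleC (a * b) x"
    and scaleC_one: "scaleC 1 x = x"
    and scaleR_scaleC: "scaleR r x = scaleC (complex_of_real r) x"
    and norm_scaleC: "norm (scaleC a x) = cmod a * norm x"
    and mult_scaleC_left: "scaleC a x * y = scaleC a (x * y)"
    and mult_scaleC_right: "x * scaleC a y = scaleC a (x * y)"
    and cstar_cstar: "cstar (cstar x) = x"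
    and cstar_add: "cstar (x + y) = cstar x + cstar y"
    and cstar_mult: "cstar (x * y) = cstar y * cstar x"
    and cstar_scaleC: "cstar (scaleC a x) = scaleC (cnj a) (cstar x)"
    and cstar_identity: "norm (cstar x * x) = norm x * norm x"

definition rideal :: "'a::monoid_mult \<Rightarrow> 'a set" where
  "rideal s = range (\<lambda>x. s * x)"

definition left_cancellative :: "'a::monoid_mult itself \<Rightarrow> bool" where
  "left_cancellative _ \<longleftrightarrow> (\<forall>a b c :: 'a. a * b = a * c \<longrightarrow> b = c)"

definition right_LCM :: "'a::monoid_mult itself \<Rightarrow> bool" where
  "right_LCM T \<longleftrightarrow> left_cancellative T \<and>
     (\<forall>s t :: 'a. rideal s \<inter> rideal t = {} \<or> (\<exists>r. rideal s \<inter> rideal t = rideal r))"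

definition foundation_set :: "'a::monoid_mult set \<Rightarrow> bool" where
  "foundation_set F \<longleftrightarrow> finite F \<and> (\<forall>t. \<exists>s\<in>F. rideal s \<inter> rideal t \<noteq> {})"

definition accurate :: "'a::monoid_mult set \<Rightarrow> bool" where
  "accurate F \<longleftrightarrow> (\<forall>f\<in>F. \<forall>f'\<in>F. f \<noteq> f' \<longrightarrow> rideal f \<inter> rideal f' = {})"

definition core :: "'a::monoid_mult set" where
  "core = {s. \<forall>t. rideal s \<inter> rideal t \<noteq> {}}"

definition constructible_ideals :: "'a::monoid_mult set set" where
  "constructible_ideals = insert {} (range rideal)"

text \<open>By the universal property of C*(S), unital *-homomorphisms pi from C*(S)
  into a unital C*-algebra B correspond exactly to families V s = pi(v_s),
  E X = pi(e_X) (X in J(S)) in B satisfying the defining relations below.\<close>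

definition li_rep :: "('a::monoid_mult \<Rightarrow> 'b::cstar_algebra) \<Rightarrow> ('a set \<Rightarrow> 'b) \<Rightarrow> bool" where
  "li_rep V E \<longleftrightarrow>
     (\<forall>s. cstar (V s) * V s = 1) \<and>
     (\<forall>X\<in>constructible_ideals. cstar (E X) = E X \<and> E X * E X = E X) \<and>
     (\<forall>s t. V (s * t) = V s * V t) \<and>
     (\<forall>s. \<forall>X\<in>constructible_ideals. V s * E X * cstar (V s) = E ((\<lambda>x. s * x) ` X)) \<and>
     E UNIV = 1 \<and> E {} = 0 \<and>
     (\<forall>X\<in>constructible_ideals. \<forall>Y\<in>constructible_ideals. E X * E Y = E (X \<inter> Y))"

end

theory Submission
  imports Defs
begin

text \<open>The range projection E(tS) is v_t v_t*.  Hence the projections of sF sum to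
  v_s (\<Sum> E(fS)) v_s*, which is 1 exactly when the inner sum is 1 and v_s is unitary.
  Those of Fs are v_f (v_s v_s*) v_f*; as F is accurate, the isometries v_f have mutually
  orthogonal ranges, so compressing by any v_g recovers v_s v_s*.  On the monoid side,
  s \<in> S_c meets every element of S, which transports the foundation property, while
  accuracy is transported by left cancellation resp. by (fs)S \<subseteq> fS.\<close>

lemma rideal_one [simp]: "rideal 1 = (UNIV :: 'a::monoid_mult set)"
  unfolding rideal_def by auto

lemma rideal_mult_subset: "rideal (a * b) \<subseteq> rideal (a :: 'a::monoid_mult)"
  unfolding rideal_def by (auto simp: mult.assoc)

lemma rideal_Int_eq_empty_iff:
  "rideal a \<inter> rideal b = {} \<longleftrightarrow> (\<forall>x y. a * x \<noteq> (b :: 'a::monoid_mult) * y)"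
  unfolding rideal_def by auto

lemma rideal_in_constructible_ideals: "rideal a \<in> constructible_ideals"
  unfolding constructible_ideals_def by auto

lemma foundation_set_nonempty: "foundation_set F \<Longrightarrow> F \<noteq> {}"
  unfolding foundation_set_def by blast

lemma foundation_set_image_mult_left:
  fixes s :: "'a::monoid_mult"
  assumes "s \<in> core" and "foundation_set F"
  shows "foundation_set ((\<lambda>f. s * f) ` F)"
  unfolding foundation_set_def
proof (intro conjI allI)
  show "finite ((\<lambda>f. s * f) ` F)"
    using assms(2) by (simp add: foundation_set_def)
  fix t
  obtain a b where ab: "s * a = t * b"
    using assms(1) unfolding core_def rideal_Int_eq_empty_iff by blast
  obtain f c d where "f \<in> F" and cd: "f * c = a * d"
    using assms(2) by (fastforce simp: foundation_set_def rideal_Int_eq_empty_iff)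
  moreover have "s * f * c = t * (b * d)"
    by (metis ab cd mult.assoc)
  ultimately show "\<exists>x\<in>(\<lambda>f. s * f) ` F. rideal x \<inter> rideal t \<noteq> {}"
    by (auto simp: rideal_Int_eq_empty_iff)
qed

lemma foundation_set_image_mult_right:
  fixes s :: "'a::monoid_mult"
  assumes "s \<in> core" and "foundation_set F"
  shows "foundation_set ((\<lambda>f. f * s) ` F)"
  unfolding foundation_set_def
proof (intro conjI allI)
  show "finite ((\<lambda>f. f * s) ` F)"
    using assms(2) by (simp add: foundation_set_def)
  fix t
  obtain f a b where "f \<in> F" and ab: "f * a = t * b"
    using assms(2) by (fastforce simp: foundation_set_def rideal_Int_eq_empty_iff)
  obtain c d where cd: "s * c = a * d"
    using assms(1) unfolding core_def rideal_Int_eq_empty_iff by blast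
  have "f * s * c = t * (b * d)"
    by (metis ab cd mult.assoc)
  with \<open>f \<in> F\<close> show "\<exists>x\<in>(\<lambda>f. f * s) ` F. rideal x \<inter> rideal t \<noteq> {}"
    by (auto simp: rideal_Int_eq_empty_iff)
qed

lemma inj_on_mult_left:
  fixes s :: "'a::monoid_mult"
  assumes "left_cancellative TYPE('a)"
  shows "inj_on (\<lambda>f. s * f) F"
  using assms by (auto simp: left_cancellative_def intro: inj_onI)

lemma accurate_image_mult_left:
  fixes s :: "'a::monoid_mult"
  assumes "left_cancellative TYPE('a)" and "accurate F"
  shows "accurate ((\<lambda>f. s * f) ` F)"
  unfolding accurate_def
proof (intro ballI impI)
  fix x y assume "x \<in> (\<lambda>f. s * f) ` F" "y \<in> (\<lambda>f. s * f) ` F" "x \<noteq> y"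
  then obtain f f' where "f \<in> F" "f' \<in> F" "f \<noteq> f'" and xy: "x = s * f" "y = s * f'"
    by blast
  then have disjoint: "\<forall>c d. f * c \<noteq> f' * d"
    using assms(2) by (simp add: accurate_def rideal_Int_eq_empty_iff)
  have "s * f * c \<noteq> s * f' * d" for c d
    using assms(1) disjoint by (metis left_cancellative_def mult.assoc)
  then show "rideal x \<inter> rideal y = {}"
    by (simp add: xy rideal_Int_eq_empty_iff)
qed

lemma accurate_image_mult_right:
  fixes s :: "'a::monoid_mult"
  assumes "accurate F"
  shows "accurate ((\<lambda>f. f * s) ` F)"
  unfolding accurate_def
proof (intro ballI impI)
  fix x y assume "x \<in> (\<lambda>f. f * s) ` F" "y \<in> (\<lambda>f. f * s) ` F" "x \<noteq> y"
  then obtain f f' where "f \<in> F" "f' \<in> F" "f \<noteq> f'" "x = f * s" "y = f' * s"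
    by blast
  with assms show "rideal x \<inter> rideal y = {}"
    using rideal_mult_subset[of f s] rideal_mult_subset[of f' s] unfolding accurate_def by blast
qed

lemma inj_on_mult_right_accurate:
  fixes s :: "'a::monoid_mult"
  assumes "accurate F"
  shows "inj_on (\<lambda>f. f * s) F"
proof (rule inj_onI)
  fix f f' assume "f \<in> F" "f' \<in> F" "f * s = f' * s"
  then show "f = f'"
    using assms by (auto simp: accurate_def rideal_Int_eq_empty_iff)
qed

lemma isometry_conj_eq_one_iff:
  fixes v q :: "'b::cstar_algebra"
  assumes "cstar v * v = 1"
  shows "v * q * cstar v = 1 \<longleftrightarrow> q = 1 \<and> v * cstar v = 1"
proof
  assume conj: "v * q * cstar v = 1"
  have "q = cstar v * (v * q * cstar v) * v"
    by (simp add: mult.assoc assms) (simp add: mult.assoc[symmetric] assms)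
  then have "q = 1"
    by (simp add: conj assms)
  with conj show "q = 1 \<and> v * cstar v = 1"
    by simp
qed simp

lemma compress_orthogonal_sum:
  fixes w x :: "'a \<Rightarrow> 'b::cstar_algebra"
  assumes "finite F" and "g \<in> F"
    and "cstar (w g) * w g = 1"
    and "\<And>f. f \<in> F \<Longrightarrow> f \<noteq> g \<Longrightarrow> cstar (w g) * w f = 0"
  shows "cstar (w g) * (\<Sum>f\<in>F. w f * x f * cstar (w f)) * w g = x g"
proof -
  have "cstar (w g) * (\<Sum>f\<in>F. w f * x f * cstar (w f)) * w g
      = (\<Sum>f\<in>F. (cstar (w g) * w f) * x f * (cstar (w f) * w g))"
    by (simp add: sum_distrib_left sum_distrib_right mult.assoc)
  also have "\<dots> = (\<Sum>f\<in>F. if f = g then x g else 0)"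
    using assms(3,4) by (intro sum.cong) auto
  also have "\<dots> = x g"
    using assms(1,2) by simp
  finally show ?thesis .
qed

lemma li_rep_isometry: "li_rep V E \<Longrightarrow> cstar (V s) * V s = 1"
  unfolding li_rep_def by blast

lemma li_rep_mult: "li_rep V E \<Longrightarrow> V (s * t) = V s * V t"
  unfolding li_rep_def by blast

lemma li_rep_E_rideal:
  assumes "li_rep V E"
  shows "E (rideal s) = V s * cstar (V s)"
proof -
  have "V s * E (rideal 1) * cstar (V s) = E ((\<lambda>x. s * x) ` rideal 1)"
    using assms rideal_in_constructible_ideals unfolding li_rep_def by blast
  moreover have "E (rideal 1) = 1"
    using assms by (simp add: li_rep_def)
  ultimately show ?thesis
    by (simp add: rideal_def)
qed

lemma li_rep_orthogonal:
  assumes "li_rep V E" and "rideal f \<inter> rideal g = {}"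
  shows "cstar (V g) * V f = 0"
proof -
  have "cstar (V g) * V f = (cstar (V g) * V g) * cstar (V g) * (V f * (cstar (V f) * V f))"
    using li_rep_isometry[OF assms(1)] by simp
  also have "\<dots> = cstar (V g) * (V g * cstar (V g)) * (V f * cstar (V f)) * V f"
    by (simp only: mult.assoc)
  also have "\<dots> = cstar (V g) * (E (rideal g) * E (rideal f)) * V f"
    using li_rep_E_rideal[OF assms(1)] by (simp add: mult.assoc)
  also have "E (rideal g) * E (rideal f) = 0"
    using assms rideal_in_constructible_ideals unfolding li_rep_def by (metis Int_commute)
  finally show ?thesis
    by simp
qed

lemma li_rep_sum_image_mult_left:
  assumes "li_rep V E" and "left_cancellative TYPE('a::monoid_mult)"
  shows "(\<Sum>f\<in>(\<lambda>f. s * f) ` F. E (rideal f)) = V s * (\<Sum>f\<in>F. E (rideal f)) * cstar (V (s :: 'a))"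
  using inj_on_mult_left[OF assms(2)]
  by (simp add: sum.reindex sum_distrib_left sum_distrib_right li_rep_E_rideal[OF assms(1)]
      li_rep_mult[OF assms(1)] cstar_mult mult.assoc)

lemma li_rep_sum_image_mult_right:
  assumes "li_rep V E" and "accurate F"
  shows "(\<Sum>f\<in>(\<lambda>f. f * s) ` F. E (rideal f)) = (\<Sum>f\<in>F. V f * (V s * cstar (V s)) * cstar (V f))"
  using inj_on_mult_right_accurate[OF assms(2)]
  by (simp add: sum.reindex li_rep_E_rideal[OF assms(1)] li_rep_mult[OF assms(1)]
      cstar_mult mult.assoc)

lemma li_rep_sum_image_mult_left_eq_one_iff:
  assumes "li_rep V E" and "left_cancellative TYPE('a::monoid_mult)"
  shows "(\<Sum>f\<in>(\<lambda>f. s * f) ` F. E (rideal f)) = 1 \<longleftrightarrow>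
         (\<Sum>f\<in>F. E (rideal f)) = 1 \<and> V s * cstar (V (s :: 'a)) = 1"
  using li_rep_sum_image_mult_left[OF assms] isometry_conj_eq_one_iff li_rep_isometry[OF assms(1)]
  by metis

lemma li_rep_sum_image_mult_right_eq_one_iff:
  assumes "li_rep V E" and "foundation_set F" and "accurate F"
  shows "(\<Sum>f\<in>(\<lambda>f. f * s) ` F. E (rideal f)) = 1 \<longleftrightarrow>
         (\<Sum>f\<in>F. E (rideal f)) = 1 \<and> V s * cstar (V s) = 1"
proof -
  let ?p = "V s * cstar (V s)"
  have sum_eq: "(\<Sum>f\<in>(\<lambda>f. f * s) ` F. E (rideal f)) = (\<Sum>f\<in>F. V f * ?p * cstar (V f))"
    using li_rep_sum_image_mult_right[OF assms(1,3)] .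
  have p_eq_one: "?p = 1" if "(\<Sum>f\<in>F. V f * ?p * cstar (V f)) = 1"
  proof -
    obtain g where "g \<in> F"
      using foundation_set_nonempty[OF assms(2)] by blast
    have "cstar (V g) * (\<Sum>f\<in>F. V f * ?p * cstar (V f)) * V g = ?p"
    proof (rule compress_orthogonal_sum)
      show "finite F"
        using assms(2) by (simp add: foundation_set_def)
      show "cstar (V f) * V f = 1" for f
        using li_rep_isometry[OF assms(1)] .
      show "cstar (V g) * V f = 0" if "f \<in> F" "f \<noteq> g" for f
        using li_rep_orthogonal[OF assms(1)] assms(3) \<open>g \<in> F\<close> that
        unfolding accurate_def by blast
    qed fact
    then show ?thesis
      using that li_rep_isometry[OF assms(1)] by simp
  qed
  show ?thesis
    unfolding sum_eq using p_eq_one li_rep_E_rideal[OF assms(1)] by auto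
qed

theorem corollary2p4:
  fixes F :: "'a::{monoid_mult, countable} set" and s :: 'a
  assumes "right_LCM TYPE('a)"
    and "foundation_set F" and "accurate F"
    and "s \<in> core"
  shows "foundation_set ((\<lambda>f. s * f) ` F) \<and> accurate ((\<lambda>f. s * f) ` F) \<and>
         foundation_set ((\<lambda>f. f * s) ` F) \<and> accurate ((\<lambda>f. f * s) ` F) \<and>
         (\<forall>(V :: 'a \<Rightarrow> 'b::cstar_algebra) E. li_rep V E \<longrightarrow>
            (((\<Sum>f\<in>(\<lambda>f. s * f) ` F. E (rideal f)) = 1 \<longleftrightarrow>
                ((\<Sum>f\<in>F. E (rideal f)) = 1 \<and> V s * cstar (V s) = 1)) \<and>
             ((\<Sum>f\<in>(\<lambda>f. f * s) ` F. E (rideal f)) = 1 \<longleftrightarrow>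
                ((\<Sum>f\<in>F. E (rideal f)) = 1 \<and> V s * cstar (V s) = 1))))"
proof -
  have lc: "left_cancellative TYPE('a)"
    using assms(1) by (simp add: right_LCM_def)
  show ?thesis
    using foundation_set_image_mult_left[OF assms(4,2)] accurate_image_mult_left[OF lc assms(3)]
      foundation_set_image_mult_right[OF assms(4,2)] accurate_image_mult_right[OF assms(3)]
      li_rep_sum_image_mult_left_eq_one_iff[OF _ lc]
      li_rep_sum_image_mult_right_eq_one_iff[OF _ assms(2,3)]
    by blast
qed

end
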